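(* Let $H=(V,\mathcal{E})$ be a hypergraph and let $K(H)$ be the graph on vertex set $V$ in which $uv$ is an edge iff $u \neq v$ and $u,v$ belong to a common hyperedge of $H$. For a set $\mathcal{C}$ of cuts, let $\mathcal{M}(\mathcal{C})$ be the integer linear program with one binary variable $x_e\in\{0,1\}$ for each edge $e$ of $K(H)$, which minimizes $\sum_{e\in E(K(H))} x_e$ subject to (1) $\sum_{u,v\in S,\ uv\in E(K(H))} x_{uv}\ \ge |S|-1$ for every $S\in\mathcal{E}$, and (2) $\sum_{e\in E(C)} x_e \ge r-1$ for every cut $C=(X_1,\dots,X_r)\in\mathcal{C}$, where $E(C)$ is the set of edges $xy$ of $K(H)$ with $x\in X_i$, $y\in X_j$, $i\neq j$. For $S\subseteq V$, let $\mathcal{B}_S=\{(X,S\setminus X): X\subseteq S,\ X\notin\{\emptyset,S\}\}$ and let $\mathcal{P}_S$ be the set of all tuples $(X_1,\dots,X_r)$ with $r\ge 2$, each $X_i$ nonempty, the $X_i$ pairwise disjoint and $\bigcup_{i=1}^r X_i=S$. Let $\mathcal{B}_H=\bigcup_{S\in\mathcal{E}}\mathcal{B}_S$ and $\mathcal{P}_H=\bigcup_{S\in\mathcal{E}}\mathcal{P}_S$. Identify a 0-1 assignment $x$ with the graph on $V$ whose edge set is $\{e : x_e=1\}$. Then the optimal solutions of $\mathcal{M}(\mathcal{P}_H)$ are in one-to-one correspondence with the optimal solutions of $\mathcal{M}(\mathcal{B}_H)$, which are in one-to-one correspondence with the optimal solutions of the Minimum Connectivity Inference instance $H$, i.e.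 graphs $G=(V,E)$ with $G[S]$ connected for every $S\in\mathcal{E}$ and $|E|$ minimum.
   Context: A cut is a tuple $(X_1,\dots,X_r)$ with $r\ge 2$ of nonempty, pairwise disjoint subsets of $V$. The Minimum Connectivity Inference (MCI) problem: given a hypergraph $H=(V,\mathcal{E})$, find a graph $G=(V,E)$ such that the induced subgraph $G[S]$ is connected for every hyperedge $S\in\mathcal{E}$ (a feasible solution), minimizing $|E|$. *)

theory Defs
  imports Main
begin

text \<open>Vertices have type 'a; an (undirected, simple) edge is a 2-element set of vertices.
A hypergraph is given by a finite vertex set V and a set Es of hyperedges, each a subset of V.\<close>

definition hypergraph :: "'a set \<Rightarrow> 'a set set \<Rightarrow> bool" where
  "hypergraph V Es \<longleftrightarrow> finite V \<and> (\<forall>S\<in>Es. S \<subseteq> V)"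

definition KH_edges :: "'a set set \<Rightarrow> 'a set set" where
  "KH_edges Es = {{u, v} | u v. u \<noteq> v \<and> (\<exists>S\<in>Es. u \<in> S \<and> v \<in> S)}"

definition is_cut :: "'a set list \<Rightarrow> bool" where
  "is_cut C \<longleftrightarrow> length C \<ge> 2 \<and> (\<forall>i<length C. C ! i \<noteq> {}) \<and>
     (\<forall>i<length C. \<forall>j<length C. i \<noteq> j \<longrightarrow> C ! i \<inter> C ! j = {})"

definition cut_edges :: "'a set set \<Rightarrow> 'a set list \<Rightarrow> 'a set set" where
  "cut_edges Es C = {e \<in> KH_edges Es. \<exists>i<length C. \<exists>j<length C. i \<noteq> j \<and>
       (\<exists>x\<in>C ! i. \<exists>y\<in>C ! j. e = {x, y})}"

definition B_set :: "'a set \<Rightarrow> 'a set list set" where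
  "B_set S = {[X, S - X] | X. X \<subseteq> S \<and> X \<noteq> {} \<and> X \<noteq> S}"

definition P_set :: "'a set \<Rightarrow> 'a set list set" where
  "P_set S = {C. is_cut C \<and> \<Union>(set C) = S}"

definition B_H :: "'a set set \<Rightarrow> 'a set list set" where
  "B_H Es = (\<Union>S\<in>Es. B_set S)"

definition P_H :: "'a set set \<Rightarrow> 'a set list set" where
  "P_H Es = (\<Union>S\<in>Es. P_set S)"

text \<open>0-1 assignments: one variable x_e in {0,1} for each edge e of K(H); the function is
taken to be 0 outside E(K(H)) so that assignments are determined by their values on E(K(H)).\<close>
definition assignment :: "'a set set \<Rightarrow> ('a set \<Rightarrow> int) \<Rightarrow> bool" where
  "assignment Es x \<longleftrightarrow> (\<forall>e\<in>KH_edges Es. x e \<in> {0, 1}) \<and> (\<forall>e. e \<notin> KH_edges Es \<longrightarrow> x e = 0)"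

definition ilp_cost :: "'a set set \<Rightarrow> ('a set \<Rightarrow> int) \<Rightarrow> int" where
  "ilp_cost Es x = (\<Sum>e\<in>KH_edges Es. x e)"

definition ilp_feasible :: "'a set set \<Rightarrow> 'a set list set \<Rightarrow> ('a set \<Rightarrow> int) \<Rightarrow> bool" where
  "ilp_feasible Es Cs x \<longleftrightarrow> assignment Es x \<and>
     (\<forall>S\<in>Es. (\<Sum>e\<in>{e \<in> KH_edges Es. e \<subseteq> S}. x e) \<ge> int (card S) - 1) \<and>
     (\<forall>C\<in>Cs. (\<Sum>e\<in>cut_edges Es C. x e) \<ge> int (length C) - 1)"

definition ilp_optimal :: "'a set set \<Rightarrow> 'a set list set \<Rightarrow> ('a set \<Rightarrow> int) \<Rightarrow> bool" where
  "ilp_optimal Es Cs x \<longleftrightarrow> ilp_feasible Es Cs x \<and>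
     (\<forall>y. ilp_feasible Es Cs y \<longrightarrow> ilp_cost Es x \<le> ilp_cost Es y)"

definition is_graph :: "'a set \<Rightarrow> 'a set set \<Rightarrow> bool" where
  "is_graph V E \<longleftrightarrow> (\<forall>e\<in>E. e \<subseteq> V \<and> card e = 2)"

definition induced_connected :: "'a set set \<Rightarrow> 'a set \<Rightarrow> bool" where
  "induced_connected E S \<longleftrightarrow>
     (\<forall>u\<in>S. \<forall>v\<in>S. (u, v) \<in> {(a, b). a \<in> S \<and> b \<in> S \<and> {a, b} \<in> E}\<^sup>*)"

definition mci_feasible :: "'a set \<Rightarrow> 'a set set \<Rightarrow> 'a set set \<Rightarrow> bool" where
  "mci_feasible V Es E \<longleftrightarrow> is_graph V E \<and> (\<forall>S\<in>Es. induced_connected E S)"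

definition mci_optimal :: "'a set \<Rightarrow> 'a set set \<Rightarrow> 'a set set \<Rightarrow> bool" where
  "mci_optimal V Es E \<longleftrightarrow> mci_feasible V Es E \<and>
     (\<forall>E'. mci_feasible V Es E' \<longrightarrow> card E \<le> card E')"

definition graph_of :: "'a set set \<Rightarrow> ('a set \<Rightarrow> int) \<Rightarrow> 'a set set" where
  "graph_of Es x = {e \<in> KH_edges Es. x e = 1}"

end

theory Submission
  imports Defs
begin

text \<open>A graph that connects S has, for any partition of S into r nonempty parts, at least
  r - 1 edges between different parts; with the partition of a hyperedge into singletons this
  is constraint (1). Hence every 0-1 assignment whose graph connects all hyperedges satisfies
  all constraints of M(P_H). Conversely, already the bipartition constraints of B_H force
  connectivity, since a disconnected hyperedge splits into a component and its complement with
  no edge in between. So both programs have as feasible solutions exactly the graphs inside K(H)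
  that are feasible for the MCI instance, and their cost is the number of edges. Finally an
  optimal MCI solution lies inside K(H), because an edge outside K(H) lies in no hyperedge
  and can be dropped.\<close>

definition induced_adj :: "'a set set \<Rightarrow> 'a set \<Rightarrow> ('a \<times> 'a) set" where
  "induced_adj F S = {(a, b). a \<in> S \<and> b \<in> S \<and> {a, b} \<in> F}"

lemma induced_connected_iff_rtrancl:
  "induced_connected F S \<longleftrightarrow> (\<forall>u\<in>S. \<forall>v\<in>S. (u, v) \<in> (induced_adj F S)\<^sup>*)"
  by (simp add: induced_connected_def induced_adj_def)

definition crossing_edges :: "'a set set \<Rightarrow> ('i \<Rightarrow> 'a set) \<Rightarrow> 'i set \<Rightarrow> 'a set set" where
  "crossing_edges F P I =
     {e \<in> F. \<exists>i\<in>I. \<exists>j\<in>I. i \<noteq> j \<and> (\<exists>x\<in>P i. \<exists>y\<in>P j. e = {x, y})}"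

text \<open>The distance to the root w along F inside S is a potential that strictly decreases
  along some edge out of every other vertex.\<close>
lemma induced_connected_descent:
  assumes conn: "induced_connected F S" and root: "w \<in> S"
  obtains d :: "'a \<Rightarrow> nat" where "\<And>v. v \<in> S \<Longrightarrow> v \<noteq> w \<Longrightarrow> \<exists>u\<in>S. {v, u} \<in> F \<and> d u < d v"
proof -
  let ?R = "induced_adj F S"
  let ?d = "\<lambda>v. LEAST n. (v, w) \<in> ?R ^^ n"
  have "\<exists>u\<in>S. {v, u} \<in> F \<and> ?d u < ?d v" if v: "v \<in> S" "v \<noteq> w" for v
  proof -
    obtain n where "(v, w) \<in> ?R ^^ n"
      using conn v root rtrancl_imp_relpow by (metis induced_connected_iff_rtrancl)
    hence path: "(v, w) \<in> ?R ^^ ?d v" by (rule LeastI)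
    with v have "?d v \<noteq> 0" by (metis relpow_0_E)
    then obtain k where k: "?d v = Suc k" using not0_implies_Suc by blast
    with path obtain u where "(v, u) \<in> ?R" "(u, w) \<in> ?R ^^ k" by (metis relpow_Suc_D2)
    moreover from this(2) have "?d u \<le> k" by (rule Least_le)
    ultimately show ?thesis using k by (auto simp: induced_adj_def)
  qed
  thus thesis by (rule that)
qed

text \<open>Root the connected graph in one part; in every other part take a vertex closest to the
  root. Its first step towards the root leaves the part, and distinct parts give distinct edges.\<close>
lemma card_crossing_edges_ge:
  fixes F :: "'a set set" and P :: "'i \<Rightarrow> 'a set"
  assumes "finite I" "finite F"
    and disjoint: "\<And>i j. i \<in> I \<Longrightarrow> j \<in> I \<Longrightarrow> i \<noteq> j \<Longrightarrow> P i \<inter> P j = {}"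
    and nonempty: "\<And>i. i \<in> I \<Longrightarrow> P i \<noteq> {}"
    and conn: "induced_connected F (\<Union>i\<in>I. P i)"
  shows "card I \<le> card (crossing_edges F P I) + 1"
proof (cases "I = {}")
  case False
  then obtain i0 w where i0: "i0 \<in> I" and w: "w \<in> P i0" using nonempty by blast
  then obtain d :: "'a \<Rightarrow> nat" where d: "\<And>v. v \<in> (\<Union>i\<in>I. P i) \<Longrightarrow> v \<noteq> w \<Longrightarrow>
      \<exists>u\<in>(\<Union>i\<in>I. P i). {v, u} \<in> F \<and> d u < d v"
    using induced_connected_descent[OF conn] by blast
  have "\<exists>v\<in>P i. \<forall>v'\<in>P i. d v \<le> d v'" if "i \<in> I" for i
    using nonempty[OF that] ex_has_least_nat[of "\<lambda>v. v \<in> P i" _ d] by blast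
  then obtain v where v: "\<And>i. i \<in> I \<Longrightarrow> v i \<in> P i \<and> (\<forall>v'\<in>P i. d (v i) \<le> d v')"
    by metis
  have "\<exists>u\<in>(\<Union>i\<in>I. P i). {v i, u} \<in> F \<and> d u < d (v i)" if "i \<in> I - {i0}" for i
    using that v[of i] disjoint[of i i0] i0 w by (intro d) auto
  then obtain u where u: "\<And>i. i \<in> I - {i0} \<Longrightarrow>
      u i \<in> (\<Union>i\<in>I. P i) \<and> {v i, u i} \<in> F \<and> d (u i) < d (v i)"
    by metis
  let ?f = "\<lambda>i. {v i, u i}"
  have "?f ` (I - {i0}) \<subseteq> crossing_edges F P I"
  proof
    fix e assume "e \<in> ?f ` (I - {i0})"
    then obtain i where i: "i \<in> I - {i0}" "e = ?f i" by blast
    then obtain j where j: "j \<in> I" "u i \<in> P j" using u by blast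
    have "j \<noteq> i" using v[of i] u[of i] i j by force
    thus "e \<in> crossing_edges F P I"
      unfolding crossing_edges_def using i j u[of i] v[of i] by blast
  qed
  moreover have "inj_on ?f (I - {i0})"
  proof (rule inj_onI, rule ccontr)
    fix i j assume i: "i \<in> I - {i0}" and j: "j \<in> I - {i0}" and "?f i = ?f j" "i \<noteq> j"
    moreover have "v i \<noteq> v j" using v[of i] v[of j] disjoint[of i j] i j \<open>i \<noteq> j\<close> by auto
    ultimately have "v i = u j \<and> u i = v j" by (auto simp: doubleton_eq_iff)
    thus False using u[OF i] u[OF j] by simp
  qed
  moreover have "finite (crossing_edges F P I)"
    using \<open>finite F\<close> by (simp add: crossing_edges_def)
  ultimately have "card (I - {i0}) \<le> card (crossing_edges F P I)"
    by (metis card_inj_on_le)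
  thus ?thesis using i0 \<open>finite I\<close> by simp
qed simp

lemma KH_edges_subset_Pow: "hypergraph V Es \<Longrightarrow> KH_edges Es \<subseteq> Pow V"
  by (auto simp: KH_edges_def hypergraph_def)

lemma finite_KH_edges: "hypergraph V Es \<Longrightarrow> finite (KH_edges Es)"
  by (meson KH_edges_subset_Pow finite_Pow_iff finite_subset hypergraph_def)

lemma card_KH_edge: "e \<in> KH_edges Es \<Longrightarrow> card e = 2"
  by (auto simp: KH_edges_def)

lemma graph_of_subset_KH_edges: "graph_of Es x \<subseteq> KH_edges Es"
  by (auto simp: graph_of_def)

lemma sum_assignment_eq_card:
  assumes "assignment Es x" "A \<subseteq> KH_edges Es" "finite A"
  shows "(\<Sum>e\<in>A. x e) = int (card (A \<inter> graph_of Es x))"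
proof -
  have "(\<Sum>e\<in>A. x e) = (\<Sum>e\<in>A. if e \<in> graph_of Es x then 1 else 0)"
    using assms(1,2) by (intro sum.cong) (auto simp: assignment_def graph_of_def)
  also have "\<dots> = int (card (A \<inter> graph_of Es x))"
    using assms(3) by (simp add: sum.If_cases)
  finally show ?thesis .
qed

lemma ilp_cost_eq_card:
  "hypergraph V Es \<Longrightarrow> assignment Es x \<Longrightarrow> ilp_cost Es x = int (card (graph_of Es x))"
  unfolding ilp_cost_def
  by (simp add: sum_assignment_eq_card finite_KH_edges Int_absorb1 graph_of_subset_KH_edges)

lemma cut_edges_Int_graph_of:
  "cut_edges Es C \<inter> graph_of Es x = crossing_edges (graph_of Es x) ((!) C) {..<length C}"
  using graph_of_subset_KH_edges by (fastforce simp: cut_edges_def crossing_edges_def)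

lemma cut_edges_pair: "cut_edges Es [X, Y] \<subseteq> {{a, b} | a b. a \<in> X \<and> b \<in> Y}"
  by (auto simp: cut_edges_def less_Suc_eq) (metis insert_commute)+

lemma B_set_subset_P_set: "B_set S \<subseteq> P_set S"
  by (auto simp: B_set_def P_set_def is_cut_def less_Suc_eq nth_Cons')

lemma B_H_subset_P_H: "B_H Es \<subseteq> P_H Es"
  using B_set_subset_P_set by (fastforce simp: B_H_def P_H_def)

lemma hyperedge_constraint_if_connected:
  assumes "hypergraph V Es" "assignment Es x" "S \<in> Es"
    and conn: "induced_connected (graph_of Es x) S"
  shows "(\<Sum>e\<in>{e \<in> KH_edges Es. e \<subseteq> S}. x e) \<ge> int (card S) - 1"
proof -
  let ?G = "graph_of Es x"
  have fin: "finite (KH_edges Es)" "finite S"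
    using assms(1,3) finite_KH_edges by (auto simp: hypergraph_def dest: finite_subset)
  have "card S \<le> card (crossing_edges ?G (\<lambda>v. {v}) S) + 1"
    using fin conn graph_of_subset_KH_edges
    by (intro card_crossing_edges_ge) (auto intro: finite_subset)
  moreover have "card (crossing_edges ?G (\<lambda>v. {v}) S) \<le> card ({e \<in> KH_edges Es. e \<subseteq> S} \<inter> ?G)"
    using fin graph_of_subset_KH_edges by (intro card_mono) (auto simp: crossing_edges_def)
  ultimately show ?thesis
    using assms(2) fin by (simp add: sum_assignment_eq_card)
qed

lemma cut_constraint_if_connected:
  assumes "hypergraph V Es" "assignment Es x" "C \<in> P_set S"
    and conn: "induced_connected (graph_of Es x) S"
  shows "(\<Sum>e\<in>cut_edges Es C. x e) \<ge> int (length C) - 1"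
proof -
  have fin: "finite (KH_edges Es)" using assms(1) by (rule finite_KH_edges)
  have "(\<Union>i\<in>{..<length C}. C ! i) = S"
    using assms(3) by (auto simp: P_set_def set_conv_nth)
  hence "card {..<length C} \<le> card (crossing_edges (graph_of Es x) ((!) C) {..<length C}) + 1"
    using assms(3) conn fin graph_of_subset_KH_edges
    by (intro card_crossing_edges_ge) (auto simp: P_set_def is_cut_def intro: finite_subset)
  moreover have "cut_edges Es C \<subseteq> KH_edges Es" by (auto simp: cut_edges_def)
  ultimately show ?thesis
    using assms(2) fin by (simp add: sum_assignment_eq_card cut_edges_Int_graph_of finite_subset)
qed

lemma induced_connected_if_ilp_feasible_B_H:
  assumes feas: "ilp_feasible Es (B_H Es) x" and S: "S \<in> Es"
  shows "induced_connected (graph_of Es x) S"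
  unfolding induced_connected_iff_rtrancl
proof (intro ballI, rule ccontr)
  fix u v assume u: "u \<in> S" and v: "v \<in> S"
  let ?R = "induced_adj (graph_of Es x) S"
  define X where "X = {w \<in> S. (u, w) \<in> ?R\<^sup>*}"
  assume "(u, v) \<notin> ?R\<^sup>*"
  with u v have "[X, S - X] \<in> B_H Es"
    unfolding B_H_def B_set_def X_def using S by blast
  hence "(\<Sum>e\<in>cut_edges Es [X, S - X]. x e) \<ge> 1"
    using feas unfolding ilp_feasible_def by force
  then obtain e where e: "e \<in> cut_edges Es [X, S - X]" "x e \<noteq> 0"
    by (metis not_one_le_zero sum.neutral)
  hence "e \<in> graph_of Es x"
    using feas by (auto simp: ilp_feasible_def assignment_def graph_of_def cut_edges_def)
  moreover obtain a b where "e = {a, b}" "a \<in> X" "b \<in> S - X"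
    using e(1) cut_edges_pair by blast
  ultimately have "(u, b) \<in> ?R\<^sup>*" "b \<notin> X"
    unfolding X_def by (auto simp: induced_adj_def intro: rtrancl_into_rtrancl)
  thus False using \<open>b \<in> S - X\<close> X_def by blast
qed

lemma ilp_feasible_iff_connected:
  assumes "hypergraph V Es" "B_H Es \<subseteq> Cs" "Cs \<subseteq> P_H Es"
  shows "ilp_feasible Es Cs x \<longleftrightarrow>
    assignment Es x \<and> (\<forall>S\<in>Es. induced_connected (graph_of Es x) S)"
proof
  assume "ilp_feasible Es Cs x"
  hence "ilp_feasible Es (B_H Es) x" using assms(2) by (auto simp: ilp_feasible_def)
  thus "assignment Es x \<and> (\<forall>S\<in>Es. induced_connected (graph_of Es x) S)"
    using induced_connected_if_ilp_feasible_B_H by (auto simp: ilp_feasible_def)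
next
  assume "assignment Es x \<and> (\<forall>S\<in>Es. induced_connected (graph_of Es x) S)"
  moreover have "\<forall>C\<in>Cs. \<exists>S\<in>Es. C \<in> P_set S" using assms(3) by (auto simp: P_H_def)
  ultimately show "ilp_feasible Es Cs x"
    using assms(1) hyperedge_constraint_if_connected cut_constraint_if_connected
    by (fastforce simp: ilp_feasible_def)
qed

definition assignment_of_graph :: "'a set set \<Rightarrow> 'a set set \<Rightarrow> 'a set \<Rightarrow> int" where
  "assignment_of_graph Es E = (\<lambda>e. if e \<in> E \<inter> KH_edges Es then 1 else 0)"

lemma assignment_assignment_of_graph: "assignment Es (assignment_of_graph Es E)"
  by (simp add: assignment_def assignment_of_graph_def)

lemma graph_of_assignment_of_graph: "graph_of Es (assignment_of_graph Es E) = E \<inter> KH_edges Es"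
  by (auto simp: graph_of_def assignment_of_graph_def)

lemma assignment_of_graph_graph_of:
  "assignment Es x \<Longrightarrow> assignment_of_graph Es (graph_of Es x) = x"
  by (fastforce simp: assignment_def assignment_of_graph_def graph_of_def)

lemma ilp_feasible_B_H_iff_mci_feasible:
  assumes "hypergraph V Es"
  shows "ilp_feasible Es (B_H Es) x \<longleftrightarrow> assignment Es x \<and> mci_feasible V Es (graph_of Es x)"
proof -
  have "is_graph V (graph_of Es x)"
    using graph_of_subset_KH_edges KH_edges_subset_Pow[OF assms] card_KH_edge
    by (fastforce simp: is_graph_def)
  thus ?thesis
    using ilp_feasible_iff_connected[OF assms order_refl B_H_subset_P_H]
    by (simp add: mci_feasible_def)
qed

lemma mci_feasible_Int_KH_edges:
  assumes "mci_feasible V Es E"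
  shows "mci_feasible V Es (E \<inter> KH_edges Es)"
proof -
  have "{a, b} \<in> KH_edges Es" if "S \<in> Es" "a \<in> S" "b \<in> S" "{a, b} \<in> E" for S a b
  proof -
    have "a \<noteq> b" using assms that(4) by (force simp: mci_feasible_def is_graph_def)
    thus ?thesis using that(1-3) by (auto simp: KH_edges_def)
  qed
  hence "induced_adj (E \<inter> KH_edges Es) S = induced_adj E S" if "S \<in> Es" for S
    using that by (auto simp: induced_adj_def)
  thus ?thesis using assms by (auto simp: mci_feasible_def is_graph_def induced_connected_iff_rtrancl)
qed

lemma finite_if_mci_feasible: "hypergraph V Es \<Longrightarrow> mci_feasible V Es E \<Longrightarrow> finite E"
  unfolding mci_feasible_def is_graph_def hypergraph_def
  by (metis PowI finite_Pow_iff finite_subset subsetI)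

lemma mci_optimal_subset_KH_edges:
  assumes "hypergraph V Es" "mci_optimal V Es E"
  shows "E \<subseteq> KH_edges Es"
proof (rule ccontr)
  assume "\<not> E \<subseteq> KH_edges Es"
  moreover have "finite E" using assms finite_if_mci_feasible mci_optimal_def by blast
  ultimately have "card (E \<inter> KH_edges Es) < card E" by (intro psubset_card_mono) auto
  moreover have "card E \<le> card (E \<inter> KH_edges Es)"
    using assms(2) mci_feasible_Int_KH_edges by (auto simp: mci_optimal_def)
  ultimately show False by simp
qed

lemma mci_optimal_graph_of_if_ilp_optimal:
  assumes hyp: "hypergraph V Es" and opt: "ilp_optimal Es (B_H Es) x"
  shows "mci_optimal V Es (graph_of Es x)"
proof -
  have x: "assignment Es x" "mci_feasible V Es (graph_of Es x)"
    using opt ilp_feasible_B_H_iff_mci_feasible[OF hyp] by (auto simp: ilp_optimal_def)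
  have "card (graph_of Es x) \<le> card E" if E: "mci_feasible V Es E" for E
  proof -
    let ?y = "assignment_of_graph Es (E \<inter> KH_edges Es)"
    have "ilp_feasible Es (B_H Es) ?y"
      using mci_feasible_Int_KH_edges[OF E] ilp_feasible_B_H_iff_mci_feasible[OF hyp]
      by (simp add: assignment_assignment_of_graph graph_of_assignment_of_graph)
    hence "ilp_cost Es x \<le> ilp_cost Es ?y" using opt by (simp add: ilp_optimal_def)
    hence "card (graph_of Es x) \<le> card (E \<inter> KH_edges Es)"
      using hyp x(1) by (simp add: ilp_cost_eq_card assignment_assignment_of_graph
          graph_of_assignment_of_graph)
    also have "\<dots> \<le> card E" using finite_if_mci_feasible[OF hyp E] by (simp add: card_mono)
    finally show ?thesis .
  qed
  thus ?thesis using x by (simp add: mci_optimal_def)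
qed

lemma ilp_optimal_assignment_of_graph_if_mci_optimal:
  assumes hyp: "hypergraph V Es" and opt: "mci_optimal V Es E"
  shows "ilp_optimal Es (B_H Es) (assignment_of_graph Es E)"
proof -
  let ?x = "assignment_of_graph Es E"
  have graph: "graph_of Es ?x = E"
    using mci_optimal_subset_KH_edges[OF assms] by (auto simp: graph_of_assignment_of_graph)
  have cost: "ilp_cost Es ?x = int (card E)"
    using ilp_cost_eq_card[OF hyp assignment_assignment_of_graph] graph by simp
  have "ilp_cost Es ?x \<le> ilp_cost Es y" if "ilp_feasible Es (B_H Es) y" for y
  proof -
    have "assignment Es y" "mci_feasible V Es (graph_of Es y)"
      using that ilp_feasible_B_H_iff_mci_feasible[OF hyp] by auto
    thus ?thesis
      using opt cost ilp_cost_eq_card[OF hyp] unfolding mci_optimal_def by auto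
  qed
  moreover have "ilp_feasible Es (B_H Es) ?x"
    using opt graph ilp_feasible_B_H_iff_mci_feasible[OF hyp] assignment_assignment_of_graph
    unfolding mci_optimal_def by auto
  ultimately show ?thesis by (simp add: ilp_optimal_def)
qed

theorem proposition1:
  fixes V :: "'a set" and Es :: "'a set set"
  assumes "hypergraph V Es"
  shows "{x. ilp_optimal Es (P_H Es) x} = {x. ilp_optimal Es (B_H Es) x}
    \<and> bij_betw (graph_of Es) {x. ilp_optimal Es (B_H Es) x} {E. mci_optimal V Es E}"
proof
  have "ilp_feasible Es (P_H Es) x \<longleftrightarrow> ilp_feasible Es (B_H Es) x" for x
    using ilp_feasible_iff_connected[OF assms B_H_subset_P_H order_refl]
      ilp_feasible_iff_connected[OF assms order_refl B_H_subset_P_H] by blast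
  thus "{x. ilp_optimal Es (P_H Es) x} = {x. ilp_optimal Es (B_H Es) x}"
    by (simp add: ilp_optimal_def)
  show "bij_betw (graph_of Es) {x. ilp_optimal Es (B_H Es) x} {E. mci_optimal V Es E}"
  proof (rule bij_betw_byWitness[where f' = "assignment_of_graph Es"])
    show "\<forall>x\<in>{x. ilp_optimal Es (B_H Es) x}. assignment_of_graph Es (graph_of Es x) = x"
      unfolding ilp_optimal_def ilp_feasible_def using assignment_of_graph_graph_of by blast
    show "\<forall>E\<in>{E. mci_optimal V Es E}. graph_of Es (assignment_of_graph Es E) = E"
      using mci_optimal_subset_KH_edges[OF assms] graph_of_assignment_of_graph by blast
    show "graph_of Es ` {x. ilp_optimal Es (B_H Es) x} \<subseteq> {E. mci_optimal V Es E}"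
      using mci_optimal_graph_of_if_ilp_optimal[OF assms] by blast
    show "assignment_of_graph Es ` {E. mci_optimal V Es E} \<subseteq> {x. ilp_optimal Es (B_H Es) x}"
      using ilp_optimal_assignment_of_graph_if_mci_optimal[OF assms] by blast
  qed
qed

end
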